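(* Let $S_2=\mathrm{span}\langle e,f\rangle$ be the two-dimensional Lie triple system with $[e,f,e]=2e$, $[e,f,f]=-2f$, over a field of characteristic zero, and let $U(S_2)$ be its universal enveloping algebra. Then for every $n\ge 0$, $(e^n,f,e)=-n\,e^n$, i.e. $-2(e^n,f,e)=2n\,e^n$.
   Context: A Lie triple system (L.t.s.) is a vector space $T$ with a trilinear product $[x,y,z]$ satisfying $[x,x,y]=0$, $[x,y,z]+[y,z,x]+[z,x,y]=0$, and $[a,b,[x,y,z]]=[[a,b,x],y,z]+[x,[a,b,y],z]+[x,y,[a,b,z]]$; the product on $S_2$ is determined by the given values together with these identities. For a unital nonassociative algebra $A$ with associator $(x,y,z)=(xy)z-x(yz)$, $\mathrm{LN_{alt}}(A)=\{a\in A : (a,x,y)=-(x,a,y)\ \forall x,y\in A\}$ is an L.t.s. with $[a,b,c]=a(bc)-b(ac)-c(ab)+c(ba)$. The universal enveloping algebra $U(T)$ is the unital algebra with an L.t.s. monomorphism $T\to\mathrm{LN_{alt}}(U(T))$ (elements of $T$ identified with their images) such that $ab=ba$ for $a,b\in T$, universal for L.t.s. homomorphisms into $\mathrm{LN_{alt}}(A)$ with this commutation property. For $c\in T$ the subalgebra generated by $c$ is associative, so $c^n$ is well defined ($c^0=1$). *)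

theory Defs
  imports Complex_Main "HOL-Library.Product_Plus"
begin

text \<open>Unital (not necessarily associative) algebras over a field: the whole type 'u is the
algebra, with scalar multiplication sc.  Powers x ^ n use the class power
(x ^ 0 = 1, x ^ Suc n = x * x ^ n), which is the power in the associative
subalgebra generated by x.\<close>

definition unital_algebra :: "('k::field \<Rightarrow> 'u::{ab_group_add,power} \<Rightarrow> 'u) \<Rightarrow> bool" where
  "unital_algebra sc \<longleftrightarrow> vector_space sc
     \<and> (\<forall>a b c::'u. (a + b) * c = a * c + b * c)
     \<and> (\<forall>a b c::'u. a * (b + c) = a * b + a * c)
     \<and> (\<forall>k a b. sc k a * b = sc k (a * b))
     \<and> (\<forall>k a b. a * sc k b = sc k (a * b))
     \<and> (\<forall>a::'u. 1 * a = a \<and> a * 1 = a)"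

definition assoc :: "'u::{minus,times} \<Rightarrow> 'u \<Rightarrow> 'u \<Rightarrow> 'u" where
  "assoc x y z = (x * y) * z - x * (y * z)"

definition LN_alt :: "'u::{uminus,minus,times} set" where
  "LN_alt = {a. \<forall>x y. assoc a x y = - assoc x a y}"

definition ltp :: "'u::{ab_group_add,times} \<Rightarrow> 'u \<Rightarrow> 'u \<Rightarrow> 'u" where
  "ltp a b c = a * (b * c) - b * (a * c) - c * (a * b) + c * (b * a)"

definition alg_hom :: "('k::field \<Rightarrow> 'u::{ab_group_add,power} \<Rightarrow> 'u) \<Rightarrow>
    ('k \<Rightarrow> 'b::{ab_group_add,power} \<Rightarrow> 'b) \<Rightarrow> ('u \<Rightarrow> 'b) \<Rightarrow> bool" where
  "alg_hom sc sc' \<Phi> \<longleftrightarrow> Vector_Spaces.linear sc sc' \<Phi> \<and> (\<forall>x y. \<Phi> (x * y) = \<Phi> x * \<Phi> y) \<and> \<Phi> 1 = 1"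

text \<open>The product determined by [e,f,e] = 2e, [e,f,f] = -2f and the L.t.s. identities is
[x,y,z] = (x1 y2 - x2 y1) (2 z1 e - 2 z2 f).\<close>

definition S2_scale :: "'k::field \<Rightarrow> 'k \<times> 'k \<Rightarrow> 'k \<times> 'k" where
  "S2_scale c x = (c * fst x, c * snd x)"

definition S2_e :: "'k::field \<times> 'k" where "S2_e = (1, 0)"
definition S2_f :: "'k::field \<times> 'k" where "S2_f = (0, 1)"

definition S2_tp :: "'k::field \<times> 'k \<Rightarrow> 'k \<times> 'k \<Rightarrow> 'k \<times> 'k \<Rightarrow> 'k \<times> 'k" where
  "S2_tp x y z = (let d = fst x * snd y - snd x * fst y in (2 * d * fst z, - 2 * d * snd z))"

definition S2_admissible :: "('k::field \<Rightarrow> 'b::{ab_group_add,power} \<Rightarrow> 'b) \<Rightarrow> ('k \<times> 'k \<Rightarrow> 'b) \<Rightarrow> bool" where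
  "S2_admissible sc \<phi> \<longleftrightarrow> Vector_Spaces.linear S2_scale sc \<phi>
     \<and> (\<forall>x. \<phi> x \<in> LN_alt)
     \<and> (\<forall>x y z. \<phi> (S2_tp x y z) = ltp (\<phi> x) (\<phi> y) (\<phi> z))
     \<and> (\<forall>x y. \<phi> x * \<phi> y = \<phi> y * \<phi> x)"

text \<open>(sc, iota) is a universal enveloping algebra of S_2; the universal property is
quantified over all unital algebras carried by the type 'b.\<close>
definition is_UEA_S2 :: "('k::field \<Rightarrow> 'u::{ab_group_add,power} \<Rightarrow> 'u) \<Rightarrow> ('k \<times> 'k \<Rightarrow> 'u)
    \<Rightarrow> 'b::{ab_group_add,power} itself \<Rightarrow> bool" where
  "is_UEA_S2 sc \<iota> (_ :: 'b itself) \<longleftrightarrow> unital_algebra sc \<and> S2_admissible sc \<iota> \<and> inj \<iota>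
     \<and> (\<forall>(sc' :: 'k \<Rightarrow> 'b \<Rightarrow> 'b) \<phi>. unital_algebra sc' \<and> S2_admissible sc' \<phi> \<longrightarrow>
          (\<exists>!\<Phi>. alg_hom sc sc' \<Phi> \<and> (\<forall>x. \<Phi> (\<iota> x) = \<phi> x)))"

end

(*
  For a in LN_alt the defining identity says that the left multiplications L satisfy
  L(a x + x a) = L(a) L(x) + L(x) L(a). Hence L(e^n) = E^n for E = L(e), and for F = L(f)
  the commutator D = [E, F] satisfies [D, E] = L([e,f,e]) = 2 E, which controls [E^n, F].
  The heart of the proof is the operator identity
    2 L(e^(n+1) f) = E^(n+1) F + F E^(n+1) + n (n+1) E^n,
  proved by induction on n: applied to e it gives (e^(n+1), f, e) = -(n+1) e^(n+1), which
  determines (e^(n+1) f) e, and then the identity above for x = e^(n+1) f yields L(e^(n+2) f).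
*)
theory Submission
  imports Defs
begin

definition lmult_commutator :: "'u::{minus,times} \<Rightarrow> 'u \<Rightarrow> 'u \<Rightarrow> 'u" where
  "lmult_commutator a b y = a * (b * y) - b * (a * y)"

locale nonassoc_algebra =
  fixes sc :: "'k::field_char_0 \<Rightarrow> 'u::{ab_group_add,power} \<Rightarrow> 'u"
  assumes unital_algebra: "unital_algebra sc"
begin

sublocale vector_space sc
  using unital_algebra unfolding unital_algebra_def by blast

lemma add_mult: "(a + b) * c = a * c + b * (c::'u)"
  and mult_add: "a * (b + c) = a * b + a * (c::'u)"
  and scale_mult: "sc k a * b = sc k (a * b)"
  and mult_scale: "a * sc k b = sc k (a * b)"
  and one_mult: "1 * a = a"
  and mult_one: "a * 1 = a"
  using unital_algebra unfolding unital_algebra_def by blast+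

lemma zero_mult: "0 * a = (0::'u)"
  using add_mult[of 0 0 a] by simp

lemma mult_zero: "a * 0 = (0::'u)"
  using mult_add[of a 0 0] by simp

lemma minus_mult: "(- a) * b = - (a * b :: 'u)"
proof -
  have "a * b + (- a) * b = 0"
    using add_mult[of a "-a" b] by (simp add: zero_mult)
  then show ?thesis
    by (simp add: add_eq_0_iff)
qed

lemma mult_minus: "a * (- b) = - (a * b :: 'u)"
proof -
  have "a * b + a * (- b) = 0"
    using mult_add[of a b "-b"] by (simp add: mult_zero)
  then show ?thesis
    by (simp add: add_eq_0_iff)
qed

lemma diff_mult: "(a - b) * c = a * c - b * (c::'u)"
  using add_mult[of a "-b" c] by (simp add: minus_mult)

lemma mult_diff: "a * (b - c) = a * b - a * (c::'u)"
  using mult_add[of a b "-c"] by (simp add: mult_minus)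

lemmas mult_simps[simp] = add_mult mult_add diff_mult mult_diff minus_mult mult_minus
  scale_mult mult_scale one_mult mult_one zero_mult mult_zero

lemma scale_two: "sc 2 x = x + x"
  by (metis scale_left_distrib scale_one one_add_one)

lemma double_cancel: "x + x = y + y \<Longrightarrow> x = (y::'u)"
  by (metis scale_two scale_cancel_left zero_neq_numeral)

lemma LN_altD:
  assumes "a \<in> LN_alt"
  shows "(a * x) * y + (x * a) * y = a * (x * y) + (x * (a * y) :: 'u)"
proof -
  have "assoc a x y = - assoc x a y"
    using assms unfolding LN_alt_def by blast
  then show ?thesis
    unfolding assoc_def by (simp add: algebra_simps)
qed

lemma LN_alt_square_mult: "a \<in> LN_alt \<Longrightarrow> (a * a) * y = a * (a * y :: 'u)"
  by (rule double_cancel) (use LN_altD[of a a y] in simp)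

lemma LN_alt_power_mult:
  assumes "a \<in> LN_alt"
  shows "a ^ n * y = ((*) a ^^ n) (y::'u)"
proof (induction n arbitrary: y)
  case 0
  show ?case by simp
next
  case (Suc n)
  have "a ^ n * a = ((*) a ^^ Suc n) 1"
    using Suc.IH[of a] by (simp only: funpow_Suc_right comp_def mult_one)
  also have "\<dots> = a ^ Suc n"
    using Suc.IH[of 1] by simp
  finally have power_Suc_right: "a ^ n * a = a ^ Suc n" .
  show ?case
  proof (rule double_cancel)
    have "a ^ Suc n * y + a ^ Suc n * y = (a * a ^ n) * y + (a ^ n * a) * y"
      by (simp only: power_Suc power_Suc_right)
    also have "\<dots> = a * (a ^ n * y) + a ^ n * (a * y)"
      by (rule LN_altD[OF assms])
    also have "\<dots> = ((*) a ^^ Suc n) y + ((*) a ^^ Suc n) y"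
      using funpow_swap1[of "(*) a" n y] by (simp add: Suc.IH)
    finally show "a ^ Suc n * y + a ^ Suc n * y = ((*) a ^^ Suc n) y + ((*) a ^^ Suc n) y" .
  qed
qed

lemma LN_alt_power_Suc_mult: "a \<in> LN_alt \<Longrightarrow> a ^ Suc n * y = a * (a ^ n * y :: 'u)"
  by (simp add: LN_alt_power_mult del: power_Suc)

lemma LN_alt_power_mult_mult: "a \<in> LN_alt \<Longrightarrow> a ^ n * (a * y) = a ^ Suc n * (y::'u)"
  by (simp add: LN_alt_power_mult funpow_Suc_right del: funpow.simps power_Suc)

lemma LN_alt_power_Suc_right: "a \<in> LN_alt \<Longrightarrow> a ^ n * a = (a ^ Suc n :: 'u)"
  using LN_alt_power_mult_mult[of a n 1] by simp

lemma LN_alt_lmult_commutator_mult: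
  assumes a: "a \<in> LN_alt" and b: "b \<in> LN_alt" and ab: "a * b = b * (a::'u)"
  shows "lmult_commutator a b (a * y) = a * lmult_commutator a b y + ltp a b a * y"
proof -
  have ab_mult: "(a * b) * z + (a * b) * z = a * (b * z) + b * (a * z)" for z
    using LN_altD[OF a, of b z] ab by simp
  have b_square: "(b * (a * a)) * y + (a * (a * b)) * y = b * (a * (a * y)) + a * (a * (b * y))"
    using LN_altD[OF b, of "a * a" y] LN_alt_square_mult[OF a] by simp
  moreover have "((a * b) * a) * y + ((a * b) * a) * y = (b * (a * a)) * y + (a * (a * b)) * y"
    using LN_altD[OF b, of a a] ab by (simp flip: add_mult)
  ultimately have aba: "((a * b) * a) * y + ((a * b) * a) * y = b * (a * (a * y)) + a * (a * (b * y))"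
    by simp
  have "(a * (a * b)) * y + (a * (a * b)) * y
      = (a * ((a * b) * y) + (a * b) * (a * y)) + (a * ((a * b) * y) + (a * b) * (a * y))
        - (((a * b) * a) * y + ((a * b) * a) * y)"
    using LN_altD[OF a, of "a * b" y] by (simp add: algebra_simps)
  also have "\<dots> = a * (b * (a * y)) + a * (b * (a * y))"
    using ab_mult[of y] ab_mult[of "a * y"] aba by (simp flip: mult_add add: algebra_simps)
  finally have "(a * (a * b)) * y = a * (b * (a * y))"
    by (rule double_cancel)
  with ab b_square show ?thesis
    unfolding lmult_commutator_def ltp_def by (simp add: algebra_simps)
qed

end

locale S2_pair =
  nonassoc_algebra sc for sc :: "'k::field_char_0 \<Rightarrow> 'u::{ab_group_add,power} \<Rightarrow> 'u" +
  fixes e f :: 'u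
  assumes e_LN_alt: "e \<in> LN_alt" and f_LN_alt: "f \<in> LN_alt"
    and e_f_commute: "e * f = f * e"
    and ltp_efe: "ltp e f e = sc 2 e"
begin

lemma lmult_commutator_e_mult: "lmult_commutator e f (e * y) = e * lmult_commutator e f y + sc 2 (e * y)"
  using LN_alt_lmult_commutator_mult[OF e_LN_alt f_LN_alt e_f_commute] by (simp add: ltp_efe)

lemma lmult_commutator_e_power: "lmult_commutator e f (e ^ n) = sc (2 * of_nat n) (e ^ n)"
proof (induction n)
  case 0
  show ?case unfolding lmult_commutator_def by (simp add: e_f_commute)
next
  case (Suc n)
  have "lmult_commutator e f (e ^ Suc n) = e * lmult_commutator e f (e ^ n) + sc 2 (e ^ Suc n)"
    using lmult_commutator_e_mult[of "e ^ n"] by simp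
  also have "\<dots> = sc (2 * of_nat (Suc n)) (e ^ Suc n)"
    by (simp add: Suc.IH algebra_simps scale_left_distrib)
  finally show ?case .
qed

lemma lmult_commutator_power_Suc:
  "lmult_commutator (e ^ Suc n) f y = e * lmult_commutator (e ^ n) f y + lmult_commutator e f (e ^ n * y)"
  unfolding lmult_commutator_def by (simp add: LN_alt_power_Suc_mult[OF e_LN_alt] del: power_Suc)

lemma lmult_commutator_power_e: "lmult_commutator (e ^ n) f e = sc (of_nat (n * Suc n)) (e ^ n)"
proof (induction n)
  case 0
  show ?case unfolding lmult_commutator_def by (simp add: e_f_commute)
next
  case (Suc n)
  have "lmult_commutator (e ^ Suc n) f e = e * lmult_commutator (e ^ n) f e + lmult_commutator e f (e ^ Suc n)"
    by (simp add: lmult_commutator_power_Suc LN_alt_power_Suc_right[OF e_LN_alt] del: power_Suc)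
  also have "\<dots> = sc (of_nat (n * Suc n)) (e ^ Suc n) + sc (2 * of_nat (Suc n)) (e ^ Suc n)"
    by (simp add: Suc.IH lmult_commutator_e_power power_Suc[symmetric] del: power_Suc)
  also have "\<dots> = sc (of_nat (Suc n * Suc (Suc n))) (e ^ Suc n)"
    by (simp only: scale_left_distrib[symmetric]) (simp add: algebra_simps)
  finally show ?case .
qed

lemma lmult_commutator_power_mult:
  "lmult_commutator (e ^ n) f (e * y) = e * lmult_commutator (e ^ n) f y + sc (2 * of_nat n) (e ^ n * y)"
proof (induction n arbitrary: y)
  case 0
  show ?case unfolding lmult_commutator_def by simp
next
  case (Suc n)
  have "lmult_commutator (e ^ Suc n) f (e * y)
      = e * (e * lmult_commutator (e ^ n) f y + sc (2 * of_nat n) (e ^ n * y))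
        + lmult_commutator e f (e * (e ^ n * y))"
    by (simp add: lmult_commutator_power_Suc Suc.IH LN_alt_power_mult_mult[OF e_LN_alt]
        LN_alt_power_Suc_mult[OF e_LN_alt] del: power_Suc)
  also have "\<dots> = e * lmult_commutator (e ^ Suc n) f y + sc (2 * of_nat (Suc n)) (e ^ Suc n * y)"
    by (simp add: lmult_commutator_power_Suc lmult_commutator_e_mult LN_alt_power_Suc_mult[OF e_LN_alt]
        algebra_simps scale_left_distrib del: power_Suc)
  finally show ?case .
qed

lemma assoc_power_Suc_f_e:
  assumes "sc 2 ((e ^ Suc n * f) * e) = e ^ Suc n * (f * e) + f * (e ^ Suc n * e) + sc (of_nat (Suc n * n)) (e ^ n * e)"
  shows "assoc (e ^ Suc n) f e = - sc (of_nat (Suc n)) (e ^ Suc n)"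
proof -
  have "sc 2 (assoc (e ^ Suc n) f e) = sc (of_nat (Suc n * n)) (e ^ Suc n) - lmult_commutator (e ^ Suc n) f e"
    unfolding assoc_def lmult_commutator_def
    using assms by (simp add: scale_two algebra_simps LN_alt_power_Suc_right[OF e_LN_alt] del: power_Suc)
  also have "\<dots> = sc 2 (- sc (of_nat (Suc n)) (e ^ Suc n))"
    unfolding lmult_commutator_power_e scale_left_diff_distrib[symmetric] scale_minus_right scale_scale
    by (simp add: algebra_simps)
  finally show ?thesis
    by (simp only: scale_cancel_left) simp
qed

lemma power_f_jordan_e:
  assumes "assoc (e ^ m) f e = - sc (of_nat m) (e ^ m)"
  shows "e * ((e ^ m * f) * y) + (e ^ m * f) * (e * y)
    = (e ^ Suc m * f) * y + (e ^ Suc m * f) * y - sc (of_nat m) (e ^ m * y)"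
proof -
  have e_g: "e * (e ^ m * f) = e ^ Suc m * f"
    by (rule LN_alt_power_Suc_mult[OF e_LN_alt, symmetric])
  have "e ^ m * (f * e) = e ^ Suc m * f"
    unfolding e_f_commute[symmetric] by (rule LN_alt_power_mult_mult[OF e_LN_alt])
  with assms have g_e: "(e ^ m * f) * e = e ^ Suc m * f - sc (of_nat m) (e ^ m)"
    unfolding assoc_def by (simp add: algebra_simps)
  show ?thesis
    using LN_altD[OF e_LN_alt, of "e ^ m * f" y] unfolding e_g g_e by (simp add: algebra_simps)
qed

lemma power_f_mult_Suc:
  assumes "\<And>y. sc 2 ((e ^ Suc n * f) * y)
    = e ^ Suc n * (f * y) + f * (e ^ Suc n * y) + sc (of_nat (Suc n * n)) (e ^ n * y)"
  shows "sc 2 ((e ^ Suc (Suc n) * f) * y)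
    = e ^ Suc (Suc n) * (f * y) + f * (e ^ Suc (Suc n) * y) + sc (of_nat (Suc (Suc n) * Suc n)) (e ^ Suc n * y)"
proof -
  define m where "m = Suc n"
  define c :: 'k where "c = of_nat m"
  define k :: 'k where "k = of_nat (m * n)"
  have law: "sc 2 ((e ^ m * f) * z) = e ^ m * (f * z) + f * (e ^ m * z) + sc k (e ^ n * z)" for z
    unfolding m_def k_def by (rule assms)
  have pow_n: "e * (e ^ n * z) = e ^ m * z" "e ^ n * (e * z) = e ^ m * z" for z
    unfolding m_def by (simp_all only: LN_alt_power_Suc_mult[OF e_LN_alt] LN_alt_power_mult_mult[OF e_LN_alt])
  have pow_m: "e * (e ^ m * z) = e ^ Suc m * z" "e ^ m * (e * z) = e ^ Suc m * z" for z
    by (simp_all only: LN_alt_power_Suc_mult[OF e_LN_alt] LN_alt_power_mult_mult[OF e_LN_alt])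
  have jordan: "e * ((e ^ m * f) * y) + (e ^ m * f) * (e * y)
      = (e ^ Suc m * f) * y + (e ^ Suc m * f) * y - sc c (e ^ m * y)"
    unfolding c_def m_def by (rule power_f_jordan_e, rule assoc_power_Suc_f_e, rule assms)
  have commutator: "e * (f * (e ^ m * y)) + e ^ m * (f * (e * y))
      = e ^ Suc m * (f * y) + f * (e ^ Suc m * y) + sc (2 * c) (e ^ m * y)"
    using lmult_commutator_power_mult[of m y] unfolding lmult_commutator_def c_def pow_m
    by (simp add: pow_m algebra_simps del: power_Suc)
  have "sc 2 (sc 2 ((e ^ Suc m * f) * y))
      = sc 2 ((e ^ Suc m * f) * y + (e ^ Suc m * f) * y - sc c (e ^ m * y)) + sc (2 * c) (e ^ m * y)"
    by (simp only: scale_right_diff_distrib scale_scale diff_add_cancel scale_two[of "(e ^ Suc m * f) * y"])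
  also have "\<dots> = e * sc 2 ((e ^ m * f) * y) + sc 2 ((e ^ m * f) * (e * y)) + sc (2 * c) (e ^ m * y)"
    by (simp only: jordan[symmetric] scale_right_distrib mult_scale)
  also have "\<dots> = e * (e ^ m * (f * y) + f * (e ^ m * y) + sc k (e ^ n * y))
      + (e ^ m * (f * (e * y)) + f * (e ^ m * (e * y)) + sc k (e ^ n * (e * y))) + sc (2 * c) (e ^ m * y)"
    unfolding law ..
  also have "\<dots> = sc 2 (e ^ Suc m * (f * y) + f * (e ^ Suc m * y))
      + (sc (2 * c) (e ^ m * y) + (sc k (e ^ m * y) + sc k (e ^ m * y)) + sc (2 * c) (e ^ m * y))"
    using commutator by (simp add: pow_n pow_m scale_two algebra_simps del: power_Suc)
  also have "\<dots> = sc 2 (e ^ Suc m * (f * y) + f * (e ^ Suc m * y) + sc (of_nat (Suc m * m)) (e ^ m * y))"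
    unfolding scale_left_distrib[symmetric] scale_right_distrib scale_scale
    by (simp add: c_def k_def m_def algebra_simps)
  finally show ?thesis
    unfolding m_def by (simp only: scale_cancel_left) simp
qed

lemma power_f_mult:
  "sc 2 ((e ^ Suc n * f) * y) = e ^ Suc n * (f * y) + f * (e ^ Suc n * y) + sc (of_nat (Suc n * n)) (e ^ n * y)"
proof (induction n arbitrary: y)
  case 0
  show ?case
    using LN_altD[OF e_LN_alt, of f y] by (simp add: e_f_commute scale_two)
next
  case (Suc n)
  then show ?case
    by (rule power_f_mult_Suc)
qed

lemma assoc_power_f_e: "assoc (e ^ n) f e = - sc (of_nat n) (e ^ n)"
proof (cases n)
  case 0
  then show ?thesis
    unfolding assoc_def by simp
next
  case (Suc m)
  then show ?thesis
    using assoc_power_Suc_f_e[OF power_f_mult] by simp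
qed

end

lemma S2_pair_image:
  fixes sc :: "'k::field_char_0 \<Rightarrow> 'u::{ab_group_add,power} \<Rightarrow> 'u"
    and \<phi> :: "'k \<times> 'k \<Rightarrow> 'u"
  assumes "unital_algebra sc" and "S2_admissible sc \<phi>"
  shows "S2_pair sc (\<phi> S2_e) (\<phi> S2_f)"
proof -
  interpret nonassoc_algebra sc
    using assms(1) by unfold_locales
  interpret \<phi>: Vector_Spaces.linear S2_scale sc \<phi>
    using assms(2) unfolding S2_admissible_def by blast
  have "S2_tp S2_e S2_f S2_e = S2_scale (2::'k) S2_e"
    unfolding S2_tp_def S2_e_def S2_f_def S2_scale_def by simp
  then have "ltp (\<phi> S2_e) (\<phi> S2_f) (\<phi> S2_e) = sc 2 (\<phi> S2_e)"
    using assms(2) unfolding S2_admissible_def by (metis \<phi>.scale)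
  with assms show ?thesis
    unfolding S2_admissible_def by unfold_locales blast+
qed

theorem mainTheorem4:
  fixes sc :: "'k::field_char_0 \<Rightarrow> 'u::{ab_group_add,power} \<Rightarrow> 'u"
    and \<iota> :: "'k \<times> 'k \<Rightarrow> 'u"
  assumes "is_UEA_S2 sc \<iota> TYPE('b::{ab_group_add,power})"
  shows "\<forall>n::nat. assoc (\<iota> S2_e ^ n) (\<iota> S2_f) (\<iota> S2_e) = - sc (of_nat n) (\<iota> S2_e ^ n)"
proof -
  from assms have "unital_algebra sc" and "S2_admissible sc \<iota>"
    unfolding is_UEA_S2_def by auto
  then interpret S2_pair sc "\<iota> S2_e" "\<iota> S2_f"
    by (rule S2_pair_image)
  show ?thesis
    using assoc_power_f_e by blast
qed

end
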